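(* Let $q$ be a prime power with $q\equiv 1\pmod 4$, $n\ge 2$, and let $M=(m_{ij})$ be an $n\times n$ matrix with entries in $\mathbb{F}_q$. (i) If $m_{ij}+m_{ji}=0$ for all $1\le i<j\le n$ and $m_{ii}=m_{11}$ for all $i$, then $\mathrm{Num}_k(M)_q=\{km_{11}\}$ for all $k\in\mathbb{F}_q$ and $0\in\mathrm{Num}'_0(M)$. (ii) If $M$ does not satisfy the hypotheses of (i), then $\mathrm{Num}_0(M)$ contains at least $(q-1)/2$ elements of $\mathbb{F}_q^*$.
   Context: The Hermitian form on $\mathbb{F}_{q^2}^n$ is $\langle u,v\rangle=\sum_i u_i^qv_i$. For an $n\times n$ matrix $M$ over $\mathbb{F}_{q^2}$: $\mathrm{Num}_0(M)=\{\langle u,Mu\rangle: u\in\mathbb{F}_{q^2}^n,\ \langle u,u\rangle=0\}$, $\mathrm{Num}'_0(M)=\{\langle u,Mu\rangle: u\in\mathbb{F}_{q^2}^n\setminus\{0\},\ \langle u,u\rangle=0\}$. For $M$ with entries in $\mathbb{F}_q$ and $k\in\mathbb{F}_q$: $\mathrm{Num}_k(M)_q=\{\langle u,Mu\rangle: u\in\mathbb{F}_q^n,\ \langle u,u\rangle=k\}$; for $u=(x_1,\dots,x_n)\in\mathbb{F}_q^n$, $\langle u,u\rangle=\sum x_i^2$ and $\langle u,Mu\rangle=\sum_{i,j}m_{ij}x_ix_j$. *)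

theory Defs
  imports "HOL-Analysis.Analysis"
begin

text \<open>We work inside a finite field 'a of order q^2 (playing the role of F_{q^2});
  F_q is its unique subfield of order q, namely the fixed points of x \<mapsto> x^q.
  Vectors of length n are 'a^'n with n = CARD('n).\<close>

definition Fq :: "nat \<Rightarrow> 'a::{finite,field} set" where
  "Fq q = {x. x ^ q = x}"

definition herm :: "nat \<Rightarrow> 'a::{finite,field}^'n \<Rightarrow> 'a^'n \<Rightarrow> 'a" where
  "herm q u v = (\<Sum>i\<in>UNIV. u$i ^ q * v$i)"

definition Num0 :: "nat \<Rightarrow> 'a::{finite,field}^'n^'n \<Rightarrow> 'a set" where
  "Num0 q M = {herm q u (M *v u) | u. herm q u u = 0}"

definition Num0' :: "nat \<Rightarrow> 'a::{finite,field}^'n^'n \<Rightarrow> 'a set" where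
  "Num0' q M = {herm q u (M *v u) | u. u \<noteq> 0 \<and> herm q u u = 0}"

definition Numk :: "nat \<Rightarrow> 'a \<Rightarrow> 'a::{finite,field}^'n^'n \<Rightarrow> 'a set" where
  "Numk q k M = {herm q u (M *v u) | u. (\<forall>i. u$i \<in> Fq q) \<and> herm q u u = k}"

end

theory Submission
  imports Defs "HOL-Number_Theory.Residues" "HOL-Computational_Algebra.Polynomial"
begin

text \<open>Let \<open>Fq q\<close> be the fixed field of \<open>x \<mapsto> x ^ q\<close>; as \<open>q \<equiv> 1 (mod 4)\<close> it contains a square
  root \<open>\<iota>\<close> of \<open>-1\<close>, and on vectors over \<open>Fq q\<close> the Hermitian form is the bilinear form
  \<open>\<Sum> x\<^sub>k y\<^sub>k\<close>. If \<open>M\<close> is \<open>m\<^sub>1\<^sub>1\<close> times the identity plus a skew-symmetric matrix,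
  then \<open>\<langle>u, M u\<rangle> = m\<^sub>1\<^sub>1 \<langle>u, u\<rangle>\<close> on such vectors; since every element of \<open>Fq q\<close> is a sum
  of two squares and \<open>e\<^sub>i + \<iota> e\<^sub>j\<close> is isotropic, this gives (i). Otherwise, for one of
  \<open>\<epsilon> = \<plusminus>\<iota>\<close> the isotropic vector \<open>e\<^sub>i + \<epsilon> e\<^sub>j\<close> has a value \<open>a \<noteq> 0\<close> in \<open>Fq q\<close>, and
  rescaling it by \<open>t \<in> Fq q\<close> multiplies the value by the norm \<open>t ^ (q + 1) = t\<^sup>2\<close>, which
  yields the \<open>(q - 1) / 2\<close> values \<open>t\<^sup>2 a\<close>.\<close>

lemma card_le_mult_card_image:
  assumes "finite A" and "\<And>y. y \<in> f ` A \<Longrightarrow> card {x\<in>A. f x = y} \<le> k"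
  shows "card A \<le> k * card (f ` A)"
proof -
  have "card A = card (\<Union>y\<in>f ` A. {x\<in>A. f x = y})"
    by (rule arg_cong[of _ _ card]) auto
  also have "\<dots> \<le> (\<Sum>y\<in>f ` A. card {x\<in>A. f x = y})"
    by (rule card_UN_le) (use assms(1) in simp)
  also have "\<dots> \<le> (\<Sum>y\<in>f ` A. k)"
    by (rule sum_mono) (rule assms(2))
  finally show ?thesis
    by (simp add: mult.commute)
qed

lemma card_square_fiber_le:
  fixes c :: "'a::idom"
  shows "card {x\<in>A. x ^ 2 = c} \<le> 2"
proof (cases "\<exists>r\<in>A. r ^ 2 = c")
  case True
  then obtain r where "r ^ 2 = c" by blast
  hence "{x\<in>A. x ^ 2 = c} \<subseteq> {r, -r}"
    by (auto simp: power2_eq_iff)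
  hence "card {x\<in>A. x ^ 2 = c} \<le> card {r, -r}"
    by (rule card_mono[rotated]) simp
  also have "\<dots> \<le> 2"
    by (simp add: card_insert_le_m1)
  finally show ?thesis .
next
  case False
  hence "{x\<in>A. x ^ 2 = c} = {}"
    by auto
  thus ?thesis
    by (metis card.empty le0)
qed

lemma roots_power_plus_linear:
  fixes a b :: "'a::field"
  assumes "n \<ge> 2"
  shows "finite {x. x ^ n + a * x = b}" and "card {x. x ^ n + a * x = b} \<le> n"
proof -
  define p where "p = Polynomial.monom (1::'a) n + [:-b, a:]"
  have "degree [:-b, a:] < degree (Polynomial.monom (1::'a) n)"
    using assms by (simp add: degree_monom_eq)
  hence degree_p: "degree p = n"
    unfolding p_def by (subst degree_add_eq_left) (simp_all add: degree_monom_eq)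
  hence "p \<noteq> 0"
    using assms by auto
  moreover have roots: "{x. poly p x = 0} = {x. x ^ n + a * x = b}"
    by (auto simp: p_def poly_monom algebra_simps)
  ultimately show "finite {x. x ^ n + a * x = b}" and "card {x. x ^ n + a * x = b} \<le> n"
    using poly_roots_finite[of p] card_poly_roots_bound[of p] degree_p by simp_all
qed

lemma power_card_minus_one_eq_one:
  fixes x :: "'a::{finite,field}"
  assumes "x \<noteq> 0"
  shows "x ^ (CARD('a) - 1) = 1"
proof -
  let ?N = "UNIV - {0::'a}"
  have "(\<Prod>y\<in>?N. x * y) = (\<Prod>y\<in>?N. y)"
    using assms by (intro prod.reindex_bij_witness[of _ "\<lambda>y. y / x" "\<lambda>y. x * y"]) auto
  hence "x ^ card ?N * (\<Prod>y\<in>?N. y) = (\<Prod>y\<in>?N. y)"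
    by (simp add: prod.distrib)
  moreover have "(\<Prod>y\<in>?N. y) \<noteq> 0" and "card ?N = CARD('a) - 1"
    by (simp_all add: card_Diff_singleton)
  ultimately show ?thesis
    by simp
qed

lemma power_card_eq_self:
  fixes x :: "'a::{finite,field}"
  shows "x ^ CARD('a) = x"
proof (cases "x = 0")
  case False
  have "CARD('a) = Suc (CARD('a) - 1)"
    by simp
  hence "x ^ CARD('a) = x * x ^ (CARD('a) - 1)"
    by (metis power_Suc)
  with False show ?thesis
    by (simp del: One_nat_def add: power_card_minus_one_eq_one)
qed simp

subsection \<open>The subfield \<open>Fq\<close>\<close>

lemma prime_CHAR_finite_field: "prime CHAR('a::{finite,field})"
  by (rule prime_CHAR_semidom) (rule finite_imp_CHAR_pos, simp)

lemma CHAR_eq_if_card_eq_prime_power: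
  assumes "prime p" and "CARD('a::{finite,field}) = p ^ k"
  shows "CHAR('a) = p"
proof -
  have "CHAR('a) dvd p ^ k"
    using CHAR_dvd_CARD[where 'a='a] assms(2) by simp
  hence "CHAR('a) dvd p"
    using prime_CHAR_finite_field[where 'a='a] prime_dvd_power by blast
  thus ?thesis
    using prime_CHAR_finite_field[where 'a='a] assms(1) by (simp add: primes_dvd_imp_eq)
qed

lemma two_neq_zero_if_odd_CHAR:
  assumes "odd CHAR('a::semiring_1)"
  shows "(2::'a) \<noteq> 0"
proof
  assume "(2::'a) = 0"
  hence "CHAR('a) dvd 2"
    by (metis of_nat_eq_0_iff_char_dvd of_nat_numeral)
  hence "CHAR('a) = 1 \<or> CHAR('a) = 2"
    using two_is_prime_nat unfolding prime_nat_iff by blast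
  with assms show False
    by auto
qed

lemma frobenius_add:
  fixes x y :: "'a::{finite,field}"
  assumes "q = CHAR('a) ^ e"
  shows "(x + y) ^ q = x ^ q + y ^ q"
  using freshmans_dream'[OF prime_CHAR_finite_field assms] .

lemma frobenius_uminus:
  fixes x :: "'a::{finite,field}"
  assumes "q = CHAR('a) ^ e"
  shows "(- x) ^ q = - (x ^ q)"
proof -
  have "q > 0"
    using assms prime_CHAR_finite_field[where 'a='a] prime_gt_0_nat by simp
  hence "x ^ q + (- x) ^ q = 0"
    by (simp flip: frobenius_add[OF assms])
  thus ?thesis
    by (simp add: eq_neg_iff_add_eq_0 add.commute)
qed

lemma frobenius_diff:
  fixes x y :: "'a::{finite,field}"
  assumes "q = CHAR('a) ^ e"
  shows "(x - y) ^ q = x ^ q - y ^ q"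
  using frobenius_add[OF assms, of x "- y"] frobenius_uminus[OF assms, of y] by simp

lemma mem_Fq_iff: "x \<in> Fq q \<longleftrightarrow> x ^ q = x"
  by (simp add: Fq_def)

lemma zero_mem_Fq: "q > 0 \<Longrightarrow> 0 \<in> Fq q"
  by (simp add: mem_Fq_iff)

lemma one_mem_Fq: "1 \<in> Fq q"
  by (simp add: mem_Fq_iff)

lemma Fq_mult: "x \<in> Fq q \<Longrightarrow> y \<in> Fq q \<Longrightarrow> x * y \<in> Fq q"
  by (simp add: mem_Fq_iff power_mult_distrib)

lemma Fq_power: "x \<in> Fq q \<Longrightarrow> x ^ n \<in> Fq q"
  by (simp add: mem_Fq_iff flip: power_mult) (metis mult.commute power_mult)

lemma Fq_add: "q = CHAR('a) ^ e \<Longrightarrow> x \<in> Fq q \<Longrightarrow> y \<in> Fq q \<Longrightarrow> x + y \<in> Fq q"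
  for x y :: "'a::{finite,field}"
  by (simp add: mem_Fq_iff frobenius_add)

lemma Fq_uminus: "q = CHAR('a) ^ e \<Longrightarrow> x \<in> Fq q \<Longrightarrow> - x \<in> Fq q"
  for x :: "'a::{finite,field}"
  by (simp add: mem_Fq_iff frobenius_uminus)

lemma Fq_diff: "q = CHAR('a) ^ e \<Longrightarrow> x \<in> Fq q \<Longrightarrow> y \<in> Fq q \<Longrightarrow> x - y \<in> Fq q"
  for x y :: "'a::{finite,field}"
  by (simp add: mem_Fq_iff frobenius_diff)

lemma card_Fq:
  assumes q: "q = CHAR('a::{finite,field}) ^ e" and card: "CARD('a) = q ^ 2"
  shows "card (Fq q :: 'a set) = q"
proof -
  have "2 \<le> CARD('a)"
    using card_mono[of UNIV "{0::'a, 1}"] by simp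
  moreover have "q ^ 2 \<le> 1" if "q \<le> 1"
    using that power_mono[of q 1 2] by simp
  ultimately have "q \<ge> 2"
    using card by linarith
  have "(Fq q :: 'a set) = {x. x ^ q + (-1) * x = 0}"
    by (auto simp: Fq_def)
  hence at_most: "card (Fq q :: 'a set) \<le> q"
    using roots_power_plus_linear(2)[OF \<open>q \<ge> 2\<close>, of "-1::'a" 0] by simp
  \<comment> \<open>\<open>x \<mapsto> x ^ q - x\<close> maps into the roots of \<open>y ^ q + y\<close> with fibres the cosets of \<open>Fq q\<close>\<close>
  define \<phi> where "\<phi> x = x ^ q - x" for x :: 'a
  have "\<phi> ` UNIV \<subseteq> {y. y ^ q + 1 * y = 0}"
  proof clarify
    fix x :: 'a
    have "x ^ (q * q) = x"
      using power_card_eq_self[of x] card by (simp add: power2_eq_square)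
    thus "\<phi> x ^ q + 1 * \<phi> x = 0"
      by (simp add: \<phi>_def frobenius_diff[OF q] flip: power_mult)
  qed
  hence "card (\<phi> ` UNIV) \<le> card {y::'a. y ^ q + 1 * y = 0}"
    by (rule card_mono[rotated]) simp
  hence image: "card (\<phi> ` UNIV) \<le> q"
    using roots_power_plus_linear(2)[OF \<open>q \<ge> 2\<close>, of "1::'a" 0] by linarith
  have fibre: "card {x\<in>UNIV. \<phi> x = \<phi> x0} \<le> card (Fq q :: 'a set)" for x0
  proof -
    have "{x\<in>UNIV. \<phi> x = \<phi> x0} \<subseteq> (+) x0 ` Fq q"
    proof clarify
      fix x assume "\<phi> x = \<phi> x0"
      hence "(x - x0) ^ q = x - x0"
        by (simp add: \<phi>_def frobenius_diff[OF q] algebra_simps)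
      thus "x \<in> (+) x0 ` Fq q"
        by (intro image_eqI[of _ _ "x - x0"]) (auto simp: mem_Fq_iff)
    qed
    hence "card {x\<in>UNIV. \<phi> x = \<phi> x0} \<le> card ((+) x0 ` Fq q)"
      by (rule card_mono[rotated]) simp
    thus ?thesis
      using card_image_le[of "Fq q" "(+) x0"] by simp
  qed
  have "CARD('a) \<le> card (Fq q :: 'a set) * card (\<phi> ` UNIV)"
    by (rule card_le_mult_card_image) (use fibre in auto)
  hence "q * q \<le> card (Fq q :: 'a set) * card (\<phi> ` UNIV)"
    using card by (simp add: power2_eq_square)
  also have "\<dots> \<le> card (Fq q :: 'a set) * q"
    using image by simp
  finally show ?thesis
    using at_most \<open>q \<ge> 2\<close> by simp
qed

lemma Fq_sqrt_minus_one:
  assumes card: "card (Fq q :: 'a set) = q" and "q mod 4 = 1"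
  obtains i :: "'a::{finite,field}" where "i \<in> Fq q" and "i ^ 2 = -1"
proof -
  have "q > 0"
    using \<open>q mod 4 = 1\<close> by (rule_tac ccontr) simp
  hence "card {0::'a, 1} \<le> card (Fq q :: 'a set)"
    by (intro card_mono) (simp_all add: zero_mem_Fq one_mem_Fq)
  hence "q \<ge> 2"
    using card by simp
  define m where "m = (q - 1) div 2"
  have "m \<ge> 2" and q_eq: "q = 2 * m + 1" and "even m"
    using \<open>q mod 4 = 1\<close> \<open>q \<ge> 2\<close> unfolding m_def by presburger+
  have "\<not> Fq q - {0} \<subseteq> {x::'a. x ^ m + 0 * x = 1}"
  proof
    assume "Fq q - {0} \<subseteq> {x::'a. x ^ m + 0 * x = 1}"
    hence "card (Fq q - {0::'a}) \<le> card {x::'a. x ^ m + 0 * x = 1}"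
      by (rule card_mono[rotated]) simp
    also have "\<dots> \<le> m"
      using roots_power_plus_linear(2)[OF \<open>m \<ge> 2\<close>] .
    finally have "card (Fq q - {0::'a}) \<le> m" .
    moreover have "card (Fq q - {0::'a}) = q - 1"
      using card \<open>q > 0\<close> by (simp add: card_Diff_singleton zero_mem_Fq)
    ultimately show False
      using q_eq \<open>m \<ge> 2\<close> by simp
  qed
  then obtain x :: 'a where x: "x \<in> Fq q" "x \<noteq> 0" "x ^ m \<noteq> 1"
    by auto
  have "x * (x ^ m) ^ 2 = x ^ q"
    by (subst q_eq) (simp add: mult.commute flip: power_mult)
  hence "(x ^ m) ^ 2 = 1"
    using x(1,2) by (simp add: mem_Fq_iff)
  hence "x ^ m = -1"
    using x(3) power2_eq_1_iff by blast
  hence "(x ^ (m div 2)) ^ 2 = -1"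
    using \<open>even m\<close> by (simp flip: power_mult)
  with x(1) show ?thesis
    using that Fq_power by blast
qed

lemma Fq_sum_of_two_squares:
  fixes k :: "'a::{finite,field}"
  assumes q: "q = CHAR('a) ^ e" and card: "card (Fq q :: 'a set) = q" and "odd q"
    and "k \<in> Fq q"
  obtains a b where "a \<in> Fq q" and "b \<in> Fq q" and "a ^ 2 + b ^ 2 = k"
proof -
  \<comment> \<open>both \<open>a ^ 2\<close> and \<open>k - b ^ 2\<close> take \<open>(q + 1) / 2\<close> values in \<open>Fq q\<close>, so they meet\<close>
  define S where "S = (\<lambda>a. a ^ 2) ` (Fq q :: 'a set)"
  define T where "T = (\<lambda>b. k - b ^ 2) ` (Fq q :: 'a set)"
  have "card (Fq q :: 'a set) \<le> 2 * card S"
    unfolding S_def by (rule card_le_mult_card_image) (simp_all add: card_square_fiber_le)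
  moreover have "card (Fq q :: 'a set) \<le> 2 * card T"
  proof -
    have "{b\<in>Fq q. k - b ^ 2 = y} = {b\<in>Fq q. b ^ 2 = k - y}" for y
      by auto
    hence "card {b\<in>Fq q. k - b ^ 2 = y} \<le> 2" for y
      by (simp add: card_square_fiber_le)
    thus ?thesis
      unfolding T_def by (intro card_le_mult_card_image) simp_all
  qed
  moreover have "S \<union> T \<subseteq> Fq q"
    using \<open>k \<in> Fq q\<close> by (auto simp: S_def T_def intro!: Fq_power Fq_diff[OF q])
  hence "card (S \<union> T) \<le> card (Fq q :: 'a set)"
    by (simp add: card_mono)
  moreover have "card S + card T = card (S \<union> T) + card (S \<inter> T)"
    by (rule card_Un_Int) (simp_all add: S_def T_def)
  ultimately have "card (S \<inter> T) \<noteq> 0"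
    using \<open>odd q\<close> card by presburger
  hence "S \<inter> T \<noteq> {}"
    by auto
  then obtain a b where "a \<in> Fq q" "b \<in> Fq q" "a ^ 2 = k - b ^ 2"
    by (auto simp: S_def T_def)
  thus ?thesis
    using that by (simp add: eq_diff_eq)
qed

subsection \<open>The Hermitian form\<close>

lemma obtain_distinct_elements:
  assumes "CARD('n) \<ge> 2"
  obtains i j :: "'n::finite" where "i \<noteq> j"
  using assms card_le_Suc0_iff_eq[of "UNIV :: 'n set"] by fastforce

lemma matrix_vector_mult_axis_nth: "(M *v axis i a) $ k = M$k$i * (a::'a::comm_semiring_1)"
  by (simp add: matrix_vector_mult_def axis_def if_distrib cong: if_cong)

lemma herm_axis_left:
  assumes "q > 0"
  shows "herm q (axis i a) v = a ^ q * v$i"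
proof -
  have "(axis i a) $ k ^ q * v$k = (if k = i then a ^ q * v$i else 0)" for k
    using assms by (simp add: axis_def zero_power)
  thus ?thesis
    by (simp add: herm_def)
qed

lemma herm_add_axis_axis:
  assumes "i \<noteq> j" and "q > 0"
  shows "herm q (axis i a + axis j b) v = a ^ q * v$i + b ^ q * v$j"
proof -
  have "(axis i a + axis j b) $ k ^ q * v$k = (axis i a) $ k ^ q * v$k + (axis j b) $ k ^ q * v$k" for k
    using assms by (simp add: axis_def zero_power)
  thus ?thesis
    using assms(2) by (simp add: herm_def sum.distrib herm_axis_left[unfolded herm_def])
qed

lemma herm_scale: "herm q (c *s u) (c *s v) = c ^ q * c * herm q u v"
  by (simp add: herm_def sum_distrib_left power_mult_distrib mult_ac)

lemma Num0_mult_norm: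
  assumes "z \<in> Num0 q M"
  shows "t ^ q * t * z \<in> Num0 q M"
proof -
  obtain u where "herm q u u = 0" and "z = herm q u (M *v u)"
    using assms by (auto simp: Num0_def)
  thus ?thesis
    unfolding Num0_def by (intro CollectI exI[of _ "t *s u"]) (simp add: herm_scale vector_scalar_commute)
qed

lemma herm_mult_eq_quadratic_form:
  assumes "\<forall>k. u$k ^ q = u$k"
  shows "herm q u (M *v u) = (\<Sum>k\<in>UNIV. \<Sum>l\<in>UNIV. M$k$l * u$k * u$l)"
  using assms by (simp add: herm_def matrix_vector_mult_def sum_distrib_left mult_ac)

lemma herm_self_eq_sum_squares:
  assumes "\<forall>k. u$k ^ q = u$k"
  shows "herm q u u = (\<Sum>k\<in>UNIV. u$k * u$k)"
  using assms by (simp add: herm_def)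

text \<open>Such an \<open>M\<close> is \<open>M$i$i\<close> times the identity plus a skew-symmetric matrix, and the quadratic
  form of a skew-symmetric matrix vanishes once \<open>2 \<noteq> 0\<close>.\<close>

lemma quadratic_form_skew_plus_scalar:
  fixes M :: "'a::idom^'n::finite^'n"
  assumes "(2::'a) \<noteq> 0" and skew: "\<forall>i j. i \<noteq> j \<longrightarrow> M$i$j + M$j$i = 0"
    and diag: "\<forall>i j. M$i$i = M$j$j"
  shows "(\<Sum>k\<in>UNIV. \<Sum>l\<in>UNIV. M$k$l * u$k * u$l) = M$i$i * (\<Sum>k\<in>UNIV. u$k * u$k)"
    (is "?Q = _")
proof -
  have pair: "M$k$l * u$k * u$l + M$l$k * u$k * u$l = (if l = k then 2 * M$i$i * (u$k * u$k) else 0)"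
    for k l
  proof (cases "l = k")
    case True
    thus ?thesis
      using diag[rule_format, of k i] by (simp add: algebra_simps)
  next
    case False
    thus ?thesis
      using skew[rule_format, of k l] by (simp flip: distrib_right)
  qed
  have "?Q + ?Q = (\<Sum>k\<in>UNIV. \<Sum>l\<in>UNIV. M$k$l * u$k * u$l + M$l$k * u$k * u$l)"
    by (subst (2) sum.swap) (simp add: sum.distrib mult_ac)
  also have "\<dots> = 2 * (M$i$i * (\<Sum>k\<in>UNIV. u$k * u$k))"
    by (simp only: pair) (simp add: sum_distrib_left mult_ac)
  finally show ?thesis
    using assms(1) by (simp flip: mult_2)
qed

lemma herm_mult_skew_plus_scalar:
  fixes M :: "'a::{finite,field}^'n^'n"
  assumes "(2::'a) \<noteq> 0"
    and "\<forall>i j. i \<noteq> j \<longrightarrow> M$i$j + M$j$i = 0" and "\<forall>i j. M$i$i = M$j$j"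
    and "\<forall>k. u$k ^ q = u$k"
  shows "herm q u (M *v u) = M$i$i * herm q u u"
  using assms quadratic_form_skew_plus_scalar[OF assms(1-3)]
  by (simp add: herm_mult_eq_quadratic_form herm_self_eq_sum_squares)

subsection \<open>The numerical ranges\<close>

lemma Numk_skew_plus_scalar:
  fixes M :: "'a::{finite,field}^'n^'n"
  assumes q: "q = CHAR('a) ^ e" and "CARD('a) = q ^ 2" and "odd CHAR('a)" and "CARD('n) \<ge> 2"
    and skew: "\<forall>i j. i \<noteq> j \<longrightarrow> M$i$j + M$j$i = 0" and diag: "\<forall>i j. M$i$i = M$j$j"
    and "k \<in> Fq q"
  shows "Numk q k M = {k * M$i$i}"
proof -
  have two: "(2::'a) \<noteq> 0"
    using \<open>odd CHAR('a)\<close> by (rule two_neq_zero_if_odd_CHAR)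
  have "odd q" and "q > 0"
    using q \<open>odd CHAR('a)\<close> by (simp_all add: odd_pos)
  obtain a b where ab: "a \<in> Fq q" "b \<in> Fq q" "a ^ 2 + b ^ 2 = k"
    using Fq_sum_of_two_squares[OF q card_Fq[OF q \<open>CARD('a) = q ^ 2\<close>] \<open>odd q\<close> \<open>k \<in> Fq q\<close>] .
  obtain i0 j0 :: 'n where "i0 \<noteq> j0"
    using \<open>CARD('n) \<ge> 2\<close> by (rule obtain_distinct_elements)
  define u where "u = axis i0 a + axis j0 b"
  have u_Fq: "\<forall>l. u$l \<in> Fq q"
    using ab \<open>q > 0\<close> \<open>i0 \<noteq> j0\<close> by (simp add: u_def axis_def zero_mem_Fq)
  have "herm q u u = k"
    using ab \<open>i0 \<noteq> j0\<close> \<open>q > 0\<close>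
    by (simp add: u_def herm_add_axis_axis) (simp add: axis_def mem_Fq_iff power2_eq_square)
  moreover have "herm q v (M *v v) = M$i$i * herm q v v" if "\<forall>l. v$l \<in> Fq q" for v
    using herm_mult_skew_plus_scalar[OF two skew diag] that by (simp add: mem_Fq_iff)
  ultimately show ?thesis
    using u_Fq unfolding Numk_def by (auto simp: mult.commute intro!: exI[of _ u])
qed

lemma herm_isotropic_axis_pair:
  assumes "i \<noteq> j" and "q > 0" and "\<epsilon> ^ q = \<epsilon>" and "\<epsilon> ^ 2 = -1"
  shows "herm q (axis i 1 + axis j \<epsilon>) (axis i 1 + axis j \<epsilon>) = 0"
  using assms by (simp add: herm_add_axis_axis) (simp add: axis_def power2_eq_square)

lemma zero_mem_Num0'_skew_plus_scalar:
  fixes M :: "'a::{finite,field}^'n^'n" and \<iota> :: 'a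
  assumes "(2::'a) \<noteq> 0" and "CARD('n) \<ge> 2" and "q > 0" and "\<iota> ^ q = \<iota>" and "\<iota> ^ 2 = -1"
    and skew: "\<forall>i j. i \<noteq> j \<longrightarrow> M$i$j + M$j$i = 0" and diag: "\<forall>i j. M$i$i = M$j$j"
  shows "0 \<in> Num0' q M"
proof -
  obtain i j :: 'n where "i \<noteq> j"
    using \<open>CARD('n) \<ge> 2\<close> by (rule obtain_distinct_elements)
  define u where "u = axis i 1 + axis j \<iota>"
  have "u \<noteq> 0"
    using \<open>i \<noteq> j\<close> by (simp add: u_def vec_eq_iff axis_def) (metis zero_neq_one)
  moreover have isotropic: "herm q u u = 0"
    unfolding u_def using \<open>i \<noteq> j\<close> assms(3-5) by (rule herm_isotropic_axis_pair)
  moreover have "\<forall>l. u$l ^ q = u$l"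
    using assms(3,4) \<open>i \<noteq> j\<close> by (simp add: u_def axis_def zero_power)
  hence "herm q u (M *v u) = 0"
    using herm_mult_skew_plus_scalar[OF assms(1) skew diag, where i = i] isotropic by simp
  ultimately show ?thesis
    unfolding Num0'_def by force
qed

lemma isotropic_value_mem_Num0:
  fixes M :: "'a::{finite,field}^'n^'n"
  assumes "i \<noteq> j" and "q > 0" and "\<epsilon> ^ q = \<epsilon>" and "\<epsilon> ^ 2 = -1"
  shows "M$i$i + M$i$j * \<epsilon> + \<epsilon> * (M$j$i + M$j$j * \<epsilon>) \<in> Num0 q M"
proof -
  define u where "u = axis i 1 + axis j \<epsilon>"
  have "herm q u u = 0"
    unfolding u_def using assms by (rule herm_isotropic_axis_pair)
  moreover have "herm q u (M *v u) = M$i$i + M$i$j * \<epsilon> + \<epsilon> * (M$j$i + M$j$j * \<epsilon>)"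
    using assms by (simp add: u_def herm_add_axis_axis matrix_vector_right_distrib matrix_vector_mult_axis_nth)
  ultimately show ?thesis
    unfolding Num0_def by force
qed

lemma nonzero_Fq_mem_Num0:
  fixes M :: "'a::{finite,field}^'n^'n" and \<iota> :: 'a
  assumes q: "q = CHAR('a) ^ e" and "(2::'a) \<noteq> 0" and "\<iota> \<in> Fq q" and "\<iota> ^ 2 = -1"
    and entries: "\<forall>i j. M$i$j \<in> Fq q"
    and not_skew_plus_scalar: "\<not> ((\<forall>i j. i \<noteq> j \<longrightarrow> M$i$j + M$j$i = 0) \<and> (\<forall>i j. M$i$i = M$j$j))"
  obtains a where "a \<in> Num0 q M" and "a \<in> Fq q" and "a \<noteq> 0"
proof -
  obtain i j where "i \<noteq> j" and defect: "M$i$j + M$j$i \<noteq> 0 \<or> M$i$i \<noteq> M$j$j"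
    using not_skew_plus_scalar by metis
  define V where "V \<epsilon> = M$i$i + M$i$j * \<epsilon> + \<epsilon> * (M$j$i + M$j$j * \<epsilon>)" for \<epsilon>
  have "V \<iota> \<noteq> 0 \<or> V (- \<iota>) \<noteq> 0"
  proof (rule ccontr)
    have square: "\<iota> * (\<iota> * x) = - x" for x
      using \<open>\<iota> ^ 2 = -1\<close> by (simp add: power2_eq_square flip: mult.assoc)
    assume "\<not> ?thesis"
    moreover have "V \<iota> + V (- \<iota>) = 2 * (M$i$i - M$j$j)"
      by (simp add: V_def algebra_simps square)
    moreover have "V \<iota> - V (- \<iota>) = 2 * \<iota> * (M$i$j + M$j$i)"
      by (simp add: V_def algebra_simps)
    moreover have "\<iota> \<noteq> 0"
      using \<open>\<iota> ^ 2 = -1\<close> by auto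
    ultimately show False
      using defect \<open>(2::'a) \<noteq> 0\<close> by simp
  qed
  then obtain \<epsilon> where "\<epsilon> \<in> Fq q" "\<epsilon> ^ 2 = -1" "V \<epsilon> \<noteq> 0"
    using \<open>\<iota> \<in> Fq q\<close> \<open>\<iota> ^ 2 = -1\<close> Fq_uminus[OF q] by fastforce
  moreover have "q > 0"
    using q prime_CHAR_finite_field[where 'a='a] prime_gt_0_nat by simp
  ultimately have "V \<epsilon> \<in> Num0 q M"
    unfolding V_def using \<open>i \<noteq> j\<close> by (intro isotropic_value_mem_Num0) (simp_all add: mem_Fq_iff)
  moreover have "V \<epsilon> \<in> Fq q"
    unfolding V_def using \<open>\<epsilon> \<in> Fq q\<close> entries by (intro Fq_add[OF q] Fq_mult) auto
  ultimately show ?thesis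
    using that \<open>V \<epsilon> \<noteq> 0\<close> by blast
qed

lemma card_Num0_inter_Fq_ge:
  fixes M :: "'a::{finite,field}^'n^'n"
  assumes q: "q = CHAR('a) ^ e" and "CARD('a) = q ^ 2" and "q mod 4 = 1" and "odd CHAR('a)"
    and "\<forall>i j. M$i$j \<in> Fq q"
    and "\<not> ((\<forall>i j. i \<noteq> j \<longrightarrow> M$i$j + M$j$i = 0) \<and> (\<forall>i j. M$i$i = M$j$j))"
  shows "(q - 1) div 2 \<le> card (Num0 q M \<inter> (Fq q - {0}))"
proof -
  have card: "card (Fq q :: 'a set) = q"
    using q \<open>CARD('a) = q ^ 2\<close> by (rule card_Fq)
  obtain \<iota> :: 'a where "\<iota> \<in> Fq q" and "\<iota> ^ 2 = -1"
    using card \<open>q mod 4 = 1\<close> by (rule Fq_sqrt_minus_one)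
  moreover have "(2::'a) \<noteq> 0"
    using \<open>odd CHAR('a)\<close> by (rule two_neq_zero_if_odd_CHAR)
  ultimately obtain a where a: "a \<in> Num0 q M" "a \<in> Fq q" "a \<noteq> 0"
    using nonzero_Fq_mem_Num0[OF q] assms(5,6) by metis
  \<comment> \<open>for \<open>t \<in> Fq q\<close> the norm \<open>t ^ q * t\<close> is \<open>t ^ 2\<close>, which takes \<open>(q - 1) / 2\<close> nonzero values\<close>
  let ?A = "Fq q - {0::'a}"
  have "t ^ 2 * a \<in> Num0 q M \<inter> (Fq q - {0})" if "t \<in> ?A" for t
  proof -
    have "t ^ 2 * a = t ^ q * t * a"
      using that by (simp add: mem_Fq_iff power2_eq_square)
    thus ?thesis
      using a that Num0_mult_norm by (simp add: Fq_mult Fq_power)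
  qed
  hence "card ((\<lambda>t. t ^ 2 * a) ` ?A) \<le> card (Num0 q M \<inter> (Fq q - {0}))"
    by (intro card_mono) auto
  moreover have "card ?A \<le> 2 * card ((\<lambda>t. t ^ 2 * a) ` ?A)"
  proof (rule card_le_mult_card_image)
    fix y
    have "{t\<in>?A. t ^ 2 * a = y} = {t\<in>?A. t ^ 2 = y / a}"
      using \<open>a \<noteq> 0\<close> by (auto simp: field_simps)
    thus "card {t\<in>?A. t ^ 2 * a = y} \<le> 2"
      using card_square_fiber_le[of ?A "y / a"] by simp
  qed simp
  moreover have "card ?A = q - 1"
    using card q prime_CHAR_finite_field[where 'a='a] prime_gt_0_nat
    by (simp add: card_Diff_singleton zero_mem_Fq)
  ultimately show ?thesis
    by linarith
qed

theorem corollary4: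
  fixes q :: nat and M :: "'a::{finite,field}^'n^'n"
  assumes "\<exists>p e. prime p \<and> e > 0 \<and> q = p ^ e"
    and "q mod 4 = 1"
    and "CARD('a) = q ^ 2"
    and "CARD('n) \<ge> 2"
    and "\<forall>i j. M$i$j \<in> Fq q"
  shows "((\<forall>i j. i \<noteq> j \<longrightarrow> M$i$j + M$j$i = 0) \<and> (\<forall>i j. M$i$i = M$j$j) \<longrightarrow>
            (\<forall>i. \<forall>k\<in>Fq q. Numk q k M = {k * M$i$i}) \<and> 0 \<in> Num0' q M)
       \<and> (\<not> ((\<forall>i j. i \<noteq> j \<longrightarrow> M$i$j + M$j$i = 0) \<and> (\<forall>i j. M$i$i = M$j$j)) \<longrightarrow>
            card (Num0 q M \<inter> (Fq q - {0})) \<ge> (q - 1) div 2)"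
proof -
  obtain p e where "prime p" and "e > 0" and "q = p ^ e"
    using assms(1) by blast
  have "CHAR('a) = p"
    using CHAR_eq_if_card_eq_prime_power[OF \<open>prime p\<close>, of "e * 2"] assms(3) \<open>q = p ^ e\<close>
    by (simp add: power_mult)
  hence q: "q = CHAR('a) ^ e"
    using \<open>q = p ^ e\<close> by simp
  have "odd q"
    using assms(2) by presburger
  hence odd_CHAR: "odd CHAR('a)"
    using \<open>e > 0\<close> q by simp
  obtain \<iota> :: 'a where "\<iota> \<in> Fq q" and "\<iota> ^ 2 = -1"
    using card_Fq[OF q assms(3)] assms(2) by (rule Fq_sqrt_minus_one)
  have "0 < q"
    using assms(2) by (rule_tac ccontr) simp
  have "0 \<in> Num0' q M" if "\<forall>i j. i \<noteq> j \<longrightarrow> M$i$j + M$j$i = 0" and "\<forall>i j. M$i$i = M$j$j"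
    using two_neq_zero_if_odd_CHAR[OF odd_CHAR] assms(4) \<open>0 < q\<close> \<open>\<iota> \<in> Fq q\<close> \<open>\<iota> ^ 2 = -1\<close> that
    by (intro zero_mem_Num0'_skew_plus_scalar) (simp_all add: mem_Fq_iff)
  thus ?thesis
    using Numk_skew_plus_scalar[OF q assms(3) odd_CHAR assms(4)]
      card_Num0_inter_Fq_ge[OF q assms(3,2) odd_CHAR assms(5)]
    by (intro conjI impI allI ballI) auto
qed

end
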